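(* Let $(\mathcal{A},P,\Theta)$ be a combinatorial proto-exact category with duality (admitting finite coproducts, $P$ additive). Let $M_1,M_2$ be symmetric forms in $\mathcal{A}$ and let $i:U\rightarrowtail M_1\oplus M_2$ be isotropic. Then $i$ factors through isotropic inflations $i_k:U_k\rightarrowtail M_k$, $k=1,2$; that is, there is an isomorphism $f:U\to U_1\oplus U_2$ with $(i_1\oplus i_2)\circ f=i$.
   Context: Proto-exact category: pointed category with inflations $\rightarrowtail$ and deflations $\twoheadrightarrow$ (containing isomorphisms, closed under composition, $0\to U$ inflations, $U\to0$ deflations) such that squares with horizontal inflations and vertical deflations are pullbacks iff pushouts, and cospans $W\rightarrowtail X\twoheadleftarrow V$ and spans $W\twoheadleftarrow U\rightarrowtail V$ complete to such biCartesian squares. Duality: functor $P:\mathcal{A}^{op}\to\mathcal{A}$, natural iso $\Theta:\mathrm{id}\Rightarrow PP^{op}$, $P(\Theta_U)\Theta_{P(U)}=\mathrm{id}$; $P$ exact ($P(0)\simeq0$, $\phi$ inflation iff $P(\phi)$ deflation, biCartesian squares preserved and reflected). Symmetric form $(M,\psi_M)$: iso $\psi_M:M\to P(M)$ with $P(\psi_M)\Theta_M=\psi_M$; $(M_1,\psi_1)\oplus(M_2,\psi_2)=(M_1\oplus M_2,\psi_1\oplus\psi_2)$. An inflation $j:U\rightarrowtail M$ is isotropic if $P(j)\psi_Mj=0$ and the induced monomorphism $U\to U^\perp$ is an inflation, where $U^\perp$ is a kernel of $P(j)\psi_M$. $\mathcal{A}$ is combinatorial if it has finite coproducts and for each inflation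 $j:U\rightarrowtail X_1\oplus X_2$ there exist inflations $j_k:U_k\rightarrowtail X_k$ and an isomorphism $f:U\to U_1\oplus U_2$ with $(j_1\oplus j_2)f=j$. *)

theory Defs
  imports Main
begin

text \<open>Composition is written cmp C g f for g after f.\<close>

record ('o, 'm) pecd =
  cdom  :: "'m \<Rightarrow> 'o"
  ccod  :: "'m \<Rightarrow> 'o"
  cmp   :: "'m \<Rightarrow> 'm \<Rightarrow> 'm"
  idt   :: "'o \<Rightarrow> 'm"
  zobj  :: "'o"
  infl  :: "'m \<Rightarrow> bool"
  defl  :: "'m \<Rightarrow> bool"
  cop   :: "'o \<Rightarrow> 'o \<Rightarrow> 'o"
  inj1  :: "'o \<Rightarrow> 'o \<Rightarrow> 'm"
  inj2  :: "'o \<Rightarrow> 'o \<Rightarrow> 'm"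
  Pob   :: "'o \<Rightarrow> 'o"
  Pmor  :: "'m \<Rightarrow> 'm"
  Theta :: "'o \<Rightarrow> 'm"

definition hom :: "('o,'m) pecd \<Rightarrow> 'm \<Rightarrow> 'o \<Rightarrow> 'o \<Rightarrow> bool" where
  "hom C f X Y \<longleftrightarrow> cdom C f = X \<and> ccod C f = Y"

definition is_category :: "('o,'m) pecd \<Rightarrow> bool" where
  "is_category C \<longleftrightarrow>
     (\<forall>X. hom C (idt C X) X X) \<and>
     (\<forall>f g. ccod C f = cdom C g \<longrightarrow> hom C (cmp C g f) (cdom C f) (ccod C g)) \<and>
     (\<forall>f. cmp C f (idt C (cdom C f)) = f \<and> cmp C (idt C (ccod C f)) f = f) \<and>
     (\<forall>f g h. ccod C f = cdom C g \<longrightarrow> ccod C g = cdom C h \<longrightarrow>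
         cmp C h (cmp C g f) = cmp C (cmp C h g) f)"

definition iso :: "('o,'m) pecd \<Rightarrow> 'm \<Rightarrow> bool" where
  "iso C f \<longleftrightarrow> (\<exists>g. hom C g (ccod C f) (cdom C f) \<and>
      cmp C g f = idt C (cdom C f) \<and> cmp C f g = idt C (ccod C f))"

definition zero_object :: "('o,'m) pecd \<Rightarrow> 'o \<Rightarrow> bool" where
  "zero_object C z \<longleftrightarrow> (\<forall>X. (\<exists>!f. hom C f z X) \<and> (\<exists>!f. hom C f X z))"

definition zero_mor :: "('o,'m) pecd \<Rightarrow> 'm \<Rightarrow> bool" where
  "zero_mor C f \<longleftrightarrow> (\<exists>a b. hom C a (cdom C f) (zobj C) \<and> hom C b (zobj C) (ccod C f)
      \<and> f = cmp C b a)"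

definition zero_hom :: "('o,'m) pecd \<Rightarrow> 'o \<Rightarrow> 'o \<Rightarrow> 'm" where
  "zero_hom C X Y = cmp C (THE b. hom C b (zobj C) Y) (THE a. hom C a X (zobj C))"

text \<open>Commutative square
     U --i--> V
     |d       |d'
     W --i'-> X \<close>
definition comm_sq :: "('o,'m) pecd \<Rightarrow> 'm \<Rightarrow> 'm \<Rightarrow> 'm \<Rightarrow> 'm \<Rightarrow> bool" where
  "comm_sq C i d d' i' \<longleftrightarrow> cdom C d = cdom C i \<and> ccod C i = cdom C d' \<and>
     ccod C d = cdom C i' \<and> ccod C d' = ccod C i' \<and> cmp C d' i = cmp C i' d"

definition pullback :: "('o,'m) pecd \<Rightarrow> 'm \<Rightarrow> 'm \<Rightarrow> 'm \<Rightarrow> 'm \<Rightarrow> bool" where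
  "pullback C i d d' i' \<longleftrightarrow> comm_sq C i d d' i' \<and>
     (\<forall>a b. cdom C a = cdom C b \<and> ccod C a = cdom C i' \<and> ccod C b = cdom C d' \<and>
        cmp C i' a = cmp C d' b \<longrightarrow>
        (\<exists>!t. hom C t (cdom C a) (cdom C i) \<and> cmp C d t = a \<and> cmp C i t = b))"

definition pushout :: "('o,'m) pecd \<Rightarrow> 'm \<Rightarrow> 'm \<Rightarrow> 'm \<Rightarrow> 'm \<Rightarrow> bool" where
  "pushout C i d d' i' \<longleftrightarrow> comm_sq C i d d' i' \<and>
     (\<forall>a b. ccod C a = ccod C b \<and> cdom C a = ccod C i \<and> cdom C b = ccod C d \<and>
        cmp C a i = cmp C b d \<longrightarrow>
        (\<exists>!t. hom C t (ccod C i') (ccod C a) \<and> cmp C t d' = a \<and> cmp C t i' = b))"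

definition bicart :: "('o,'m) pecd \<Rightarrow> 'm \<Rightarrow> 'm \<Rightarrow> 'm \<Rightarrow> 'm \<Rightarrow> bool" where
  "bicart C i d d' i' \<longleftrightarrow> pullback C i d d' i' \<and> pushout C i d d' i'"

definition adm_sq :: "('o,'m) pecd \<Rightarrow> 'm \<Rightarrow> 'm \<Rightarrow> 'm \<Rightarrow> 'm \<Rightarrow> bool" where
  "adm_sq C i d d' i' \<longleftrightarrow> comm_sq C i d d' i' \<and> infl C i \<and> infl C i' \<and> defl C d \<and> defl C d'"

definition proto_exact :: "('o,'m) pecd \<Rightarrow> bool" where
  "proto_exact C \<longleftrightarrow> is_category C \<and> zero_object C (zobj C) \<and>
     (\<forall>f. iso C f \<longrightarrow> infl C f \<and> defl C f) \<and>
     (\<forall>f g. ccod C f = cdom C g \<longrightarrow> infl C f \<longrightarrow> infl C g \<longrightarrow> infl C (cmp C g f)) \<and>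
     (\<forall>f g. ccod C f = cdom C g \<longrightarrow> defl C f \<longrightarrow> defl C g \<longrightarrow> defl C (cmp C g f)) \<and>
     (\<forall>X f. hom C f (zobj C) X \<longrightarrow> infl C f) \<and>
     (\<forall>X f. hom C f X (zobj C) \<longrightarrow> defl C f) \<and>
     (\<forall>i d d' i'. adm_sq C i d d' i' \<longrightarrow> (pullback C i d d' i' \<longleftrightarrow> pushout C i d d' i')) \<and>
     (\<forall>d' i'. infl C i' \<and> defl C d' \<and> ccod C i' = ccod C d' \<longrightarrow>
        (\<exists>i d. adm_sq C i d d' i' \<and> bicart C i d d' i')) \<and>
     (\<forall>i d. infl C i \<and> defl C d \<and> cdom C i = cdom C d \<longrightarrow>
        (\<exists>d' i'. adm_sq C i d d' i' \<and> bicart C i d d' i'))"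

definition exact_duality :: "('o,'m) pecd \<Rightarrow> bool" where
  "exact_duality C \<longleftrightarrow>
     (\<forall>X. Pmor C (idt C X) = idt C (Pob C X)) \<and>
     (\<forall>f. hom C (Pmor C f) (Pob C (ccod C f)) (Pob C (cdom C f))) \<and>
     (\<forall>f g. ccod C f = cdom C g \<longrightarrow> Pmor C (cmp C g f) = cmp C (Pmor C f) (Pmor C g)) \<and>
     (\<forall>U. hom C (Theta C U) U (Pob C (Pob C U)) \<and> iso C (Theta C U)) \<and>
     (\<forall>f. cmp C (Theta C (ccod C f)) f = cmp C (Pmor C (Pmor C f)) (Theta C (cdom C f))) \<and>
     (\<forall>U. cmp C (Pmor C (Theta C U)) (Theta C (Pob C U)) = idt C (Pob C U)) \<and>
     (\<exists>f. hom C f (Pob C (zobj C)) (zobj C) \<and> iso C f) \<and>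
     (\<forall>\<phi>. infl C \<phi> \<longleftrightarrow> defl C (Pmor C \<phi>)) \<and>
     (\<forall>i d d' i'. adm_sq C i d d' i' \<longrightarrow>
        (bicart C i d d' i' \<longleftrightarrow> bicart C (Pmor C d') (Pmor C i') (Pmor C i) (Pmor C d)))"

text \<open>Chosen binary coproducts (with the zero object this gives all finite coproducts).\<close>
definition has_coproducts :: "('o,'m) pecd \<Rightarrow> bool" where
  "has_coproducts C \<longleftrightarrow> (\<forall>X Y. hom C (inj1 C X Y) X (cop C X Y) \<and> hom C (inj2 C X Y) Y (cop C X Y) \<and>
     (\<forall>a b. cdom C a = X \<and> cdom C b = Y \<and> ccod C a = ccod C b \<longrightarrow>
        (\<exists>!h. hom C h (cop C X Y) (ccod C a) \<and> cmp C h (inj1 C X Y) = a \<and> cmp C h (inj2 C X Y) = b)))"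

definition copair :: "('o,'m) pecd \<Rightarrow> 'm \<Rightarrow> 'm \<Rightarrow> 'm" where
  "copair C a b = (THE h. hom C h (cop C (cdom C a) (cdom C b)) (ccod C a) \<and>
      cmp C h (inj1 C (cdom C a) (cdom C b)) = a \<and> cmp C h (inj2 C (cdom C a) (cdom C b)) = b)"

definition dsum :: "('o,'m) pecd \<Rightarrow> 'm \<Rightarrow> 'm \<Rightarrow> 'm" where
  "dsum C f g = copair C (cmp C (inj1 C (ccod C f) (ccod C g)) f) (cmp C (inj2 C (ccod C f) (ccod C g)) g)"

definition proj1 :: "('o,'m) pecd \<Rightarrow> 'o \<Rightarrow> 'o \<Rightarrow> 'm" where
  "proj1 C X Y = copair C (idt C X) (zero_hom C Y X)"

definition proj2 :: "('o,'m) pecd \<Rightarrow> 'o \<Rightarrow> 'o \<Rightarrow> 'm" where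
  "proj2 C X Y = copair C (zero_hom C X Y) (idt C Y)"

definition can :: "('o,'m) pecd \<Rightarrow> 'o \<Rightarrow> 'o \<Rightarrow> 'm" where
  "can C X Y = copair C (Pmor C (proj1 C X Y)) (Pmor C (proj2 C X Y))"

definition additive_duality :: "('o,'m) pecd \<Rightarrow> bool" where
  "additive_duality C \<longleftrightarrow> (\<forall>X Y. iso C (can C X Y))"

definition combinatorial :: "('o,'m) pecd \<Rightarrow> bool" where
  "combinatorial C \<longleftrightarrow> has_coproducts C \<and>
     (\<forall>j X1 X2. infl C j \<and> ccod C j = cop C X1 X2 \<longrightarrow>
        (\<exists>j1 j2 f. infl C j1 \<and> infl C j2 \<and> ccod C j1 = X1 \<and> ccod C j2 = X2 \<and>
           hom C f (cdom C j) (cop C (cdom C j1) (cdom C j2)) \<and> iso C f \<and>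
           cmp C (dsum C j1 j2) f = j))"

definition sym_form :: "('o,'m) pecd \<Rightarrow> 'o \<Rightarrow> 'm \<Rightarrow> bool" where
  "sym_form C M \<psi> \<longleftrightarrow> hom C \<psi> M (Pob C M) \<and> iso C \<psi> \<and> cmp C (Pmor C \<psi>) (Theta C M) = \<psi>"

text \<open>Orthogonal sum of forms, P(M1 \<oplus> M2) identified with P M1 \<oplus> P M2 via can.\<close>
definition sum_form :: "('o,'m) pecd \<Rightarrow> 'o \<Rightarrow> 'o \<Rightarrow> 'm \<Rightarrow> 'm \<Rightarrow> 'm" where
  "sum_form C M1 M2 \<psi>1 \<psi>2 = cmp C (can C M1 M2) (dsum C \<psi>1 \<psi>2)"

definition is_kernel :: "('o,'m) pecd \<Rightarrow> 'm \<Rightarrow> 'm \<Rightarrow> bool" where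
  "is_kernel C h k \<longleftrightarrow> ccod C k = cdom C h \<and> zero_mor C (cmp C h k) \<and>
     (\<forall>g. ccod C g = cdom C h \<and> zero_mor C (cmp C h g) \<longrightarrow>
        (\<exists>!t. hom C t (cdom C g) (cdom C k) \<and> cmp C k t = g))"

definition isotropic :: "('o,'m) pecd \<Rightarrow> 'o \<Rightarrow> 'm \<Rightarrow> 'm \<Rightarrow> bool" where
  "isotropic C M \<psi> j \<longleftrightarrow> infl C j \<and> ccod C j = M \<and>
     zero_mor C (cmp C (Pmor C j) (cmp C \<psi> j)) \<and>
     (\<exists>k u. is_kernel C (cmp C (Pmor C j) \<psi>) k \<and> hom C u (cdom C j) (cdom C k) \<and>
        cmp C k u = j \<and> infl C u)"

end

(* Let \<psi> = \<psi>1 \<oplus> \<psi>2. The kernel U\<^sup>\<perp> of the deflation P(i) \<psi> is an inflation into M1 \<oplus> M2,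
   so by combinatoriality U\<^sup>\<perp> \<cong> K1 \<oplus> K2 with K_j \<rightarrowtail> M_j, and then U \<rightarrowtail> U\<^sup>\<perp> splits as
   V1 \<oplus> V2 \<rightarrowtail> K1 \<oplus> K2; put i_j : V_j \<rightarrowtail> K_j \<rightarrowtail> M_j. As \<psi> is an orthogonal sum, restricting
   P(i) \<psi> along M_j \<rightarrowtail> M1 \<oplus> M2 gives P(i_j) \<psi>_j followed by a split monomorphism, and kernels
   pass to such retracts: K_j is the kernel of P(i_j) \<psi>_j, so i_j is isotropic. *)

theory Submission
  imports Defs
begin

locale pecd_category =
  fixes C :: "('o, 'm) pecd"
  assumes category: "is_category C"
begin

abbreviation comp (infixl "\<cdot>" 80) where "g \<cdot> f \<equiv> cmp C g f"
abbreviation "dm \<equiv> cdom C"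
abbreviation "cd \<equiv> ccod C"

lemma dom_comp [simp]: "cd f = dm g \<Longrightarrow> dm (g \<cdot> f) = dm f"
  and cod_comp [simp]: "cd f = dm g \<Longrightarrow> cd (g \<cdot> f) = cd g"
  using category unfolding is_category_def hom_def by blast+

lemma comp_assoc [simp]: "cd f = dm g \<Longrightarrow> cd g = dm h \<Longrightarrow> h \<cdot> (g \<cdot> f) = h \<cdot> g \<cdot> f"
  using category unfolding is_category_def by blast

lemma dom_id [simp]: "dm (idt C X) = X"
  and cod_id [simp]: "cd (idt C X) = X"
  using category unfolding is_category_def hom_def by blast+

lemma comp_id_right [simp]: "dm f = X \<Longrightarrow> f \<cdot> idt C X = f"
  and comp_id_left [simp]: "cd f = X \<Longrightarrow> idt C X \<cdot> f = f"
  using category unfolding is_category_def by blast+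

text \<open>The simplifier keeps composites left-associated; this lifts \<open>a \<cdot> b = c\<close> to that normal form.\<close>
lemma comp_eq_extend: "a \<cdot> b = c \<Longrightarrow> cd b = dm a \<Longrightarrow> cd a = dm x \<Longrightarrow> x \<cdot> a \<cdot> b = x \<cdot> c"
  by (metis comp_assoc)

lemma isoI:
  "dm g = cd f \<Longrightarrow> cd g = dm f \<Longrightarrow> g \<cdot> f = idt C (dm f) \<Longrightarrow> f \<cdot> g = idt C (cd f) \<Longrightarrow> iso C f"
  unfolding iso_def hom_def by blast

lemma isoE:
  assumes "iso C f"
  obtains g where "iso C g" "dm g = cd f" "cd g = dm f" "g \<cdot> f = idt C (dm f)" "f \<cdot> g = idt C (cd f)"
  using assms isoI unfolding iso_def hom_def by metis

lemma iso_comp: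
  assumes f: "iso C f" and g: "iso C g" and fg: "cd f = dm g"
  shows "iso C (g \<cdot> f)"
proof -
  obtain f' where f': "dm f' = cd f" "cd f' = dm f" "f' \<cdot> f = idt C (dm f)" "f \<cdot> f' = idt C (cd f)"
    using f by (rule isoE)
  obtain g' where g': "dm g' = cd g" "cd g' = dm g" "g' \<cdot> g = idt C (dm g)" "g \<cdot> g' = idt C (cd g)"
    using g by (rule isoE)
  have "g' \<cdot> (g \<cdot> f) = f" "f \<cdot> (f' \<cdot> g') = g'"
    using f' g' fg by simp_all
  then have "f' \<cdot> g' \<cdot> (g \<cdot> f) = f' \<cdot> f" "g \<cdot> f \<cdot> (f' \<cdot> g') = g \<cdot> g'"
    using f' g' fg by (simp_all flip: comp_assoc)
  then show ?thesis using f' g' fg by (intro isoI[of "f' \<cdot> g'"]) simp_all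
qed

definition is_retract :: "'m \<Rightarrow> 'm \<Rightarrow> bool" where
  "is_retract e p \<longleftrightarrow> dm p = cd e \<and> cd p = dm e \<and> p \<cdot> e = idt C (dm e)"

lemma is_retract_comp_iso:
  assumes "is_retract s r" "iso C f" "cd f = dm r"
  obtains s' where "is_retract s' (r \<cdot> f)"
proof -
  obtain f' where f': "dm f' = cd f" "cd f' = dm f" "f \<cdot> f' = idt C (cd f)"
    using assms(2) by (rule isoE)
  have "f \<cdot> (f' \<cdot> s) = s" using assms(1,3) f' unfolding is_retract_def by simp
  then have "is_retract (f' \<cdot> s) (r \<cdot> f)"
    using assms(1,3) f' unfolding is_retract_def by (simp flip: comp_assoc)
  then show ?thesis by (rule that)
qed

end

locale pointed_category = pecd_category +
  assumes zero_object: "zero_object C (zobj C)"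
begin

lemma to_zero_unique: "cd a = zobj C \<Longrightarrow> cd b = zobj C \<Longrightarrow> dm a = dm b \<Longrightarrow> a = b"
  and from_zero_unique: "dm a = zobj C \<Longrightarrow> dm b = zobj C \<Longrightarrow> cd a = cd b \<Longrightarrow> a = b"
  using zero_object unfolding zero_object_def hom_def by metis+

definition to_zero where "to_zero X = (THE a. hom C a X (zobj C))"
definition from_zero where "from_zero Y = (THE b. hom C b (zobj C) Y)"

lemma to_zero_hom: "hom C (to_zero X) X (zobj C)"
proof -
  have "\<exists>!a. hom C a X (zobj C)" using zero_object unfolding zero_object_def by blast
  then show ?thesis unfolding to_zero_def by (rule theI')
qed

lemma from_zero_hom: "hom C (from_zero Y) (zobj C) Y"
proof -
  have "\<exists>!b. hom C b (zobj C) Y" using zero_object unfolding zero_object_def by blast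
  then show ?thesis unfolding from_zero_def by (rule theI')
qed

lemma to_zero_dom [simp]: "dm (to_zero X) = X"
  and to_zero_cod [simp]: "cd (to_zero X) = zobj C"
  and from_zero_dom [simp]: "dm (from_zero Y) = zobj C"
  and from_zero_cod [simp]: "cd (from_zero Y) = Y"
  using to_zero_hom from_zero_hom unfolding hom_def by blast+

lemma zero_hom_eq: "zero_hom C X Y = from_zero Y \<cdot> to_zero X"
  unfolding zero_hom_def to_zero_def from_zero_def ..

lemma zero_hom_dom [simp]: "dm (zero_hom C X Y) = X"
  and zero_hom_cod [simp]: "cd (zero_hom C X Y) = Y"
  unfolding zero_hom_eq by simp_all

lemma zero_mor_iff: "zero_mor C f \<longleftrightarrow> f = zero_hom C (dm f) (cd f)"
proof
  assume "zero_mor C f"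
  then obtain a b where a: "dm a = dm f" "cd a = zobj C" and b: "dm b = zobj C" "cd b = cd f"
    and f: "b \<cdot> a = f"
    unfolding zero_mor_def hom_def by blast
  have "a = to_zero (dm f)" by (rule to_zero_unique) (use a in simp_all)
  moreover have "b = from_zero (cd f)" by (rule from_zero_unique) (use b in simp_all)
  ultimately show "f = zero_hom C (dm f) (cd f)" using f unfolding zero_hom_eq by simp
next
  assume "f = zero_hom C (dm f) (cd f)"
  then show "zero_mor C f"
    using to_zero_hom from_zero_hom unfolding zero_mor_def zero_hom_eq by blast
qed

lemma zero_hom_comp_right:
  assumes "dm f = X" "cd f = Y" shows "zero_hom C Y Z \<cdot> f = zero_hom C X Z"
proof -
  have "zero_hom C Y Z \<cdot> f = from_zero Z \<cdot> (to_zero Y \<cdot> f)"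
    unfolding zero_hom_eq using assms by simp
  also have "to_zero Y \<cdot> f = to_zero X" by (rule to_zero_unique) (use assms in simp_all)
  finally show ?thesis unfolding zero_hom_eq .
qed

lemma zero_hom_comp_left:
  assumes "dm g = Y" "cd g = Z" shows "g \<cdot> zero_hom C X Y = zero_hom C X Z"
proof -
  have "g \<cdot> from_zero Y = from_zero Z" by (rule from_zero_unique) (use assms in simp_all)
  then show ?thesis unfolding zero_hom_eq using assms by simp
qed

lemma zero_mor_comp_left:
  assumes "zero_mor C f" "cd f = dm g"
  shows "zero_mor C (g \<cdot> f)"
proof -
  obtain a b where a: "dm a = dm f" "cd a = zobj C" and b: "dm b = zobj C" "cd b = cd f"
    and f: "b \<cdot> a = f"
    using assms(1) unfolding zero_mor_def hom_def by metis
  have "g \<cdot> f = g \<cdot> b \<cdot> a" unfolding f[symmetric] using a(2) b assms(2) by (simp only: comp_assoc)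
  then show ?thesis
    unfolding zero_mor_def hom_def using a b assms(2) by (intro exI[of _ a] exI[of _ "g \<cdot> b"]) simp
qed

lemma zero_mor_comp_right:
  assumes "zero_mor C f" "cd g = dm f"
  shows "zero_mor C (f \<cdot> g)"
proof -
  obtain a b where a: "dm a = dm f" "cd a = zobj C" and b: "dm b = zobj C" "cd b = cd f"
    and f: "b \<cdot> a = f"
    using assms(1) unfolding zero_mor_def hom_def by metis
  have "f \<cdot> g = b \<cdot> (a \<cdot> g)" unfolding f[symmetric] using a b(1) assms(2) by (simp only: comp_assoc)
  then show ?thesis
    unfolding zero_mor_def hom_def using a b assms(2) by (intro exI[of _ "a \<cdot> g"] exI[of _ b]) simp
qed

lemma is_kernel_cod: "is_kernel C h k \<Longrightarrow> cd k = dm h"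
  and is_kernel_zero: "is_kernel C h k \<Longrightarrow> zero_mor C (h \<cdot> k)"
  unfolding is_kernel_def by blast+

lemma is_kernel_lift:
  "is_kernel C h k \<Longrightarrow> cd g = dm h \<Longrightarrow> zero_mor C (h \<cdot> g) \<Longrightarrow>
    \<exists>!t. hom C t (dm g) (dm k) \<and> k \<cdot> t = g"
  unfolding is_kernel_def by blast

lemma is_kernel_cancel:
  assumes k: "is_kernel C h k" and "cd a = dm k" "cd b = dm k" "dm a = dm b" "k \<cdot> a = k \<cdot> b"
  shows "a = b"
proof -
  have kc: "cd k = dm h" using k by (rule is_kernel_cod)
  have "cd (k \<cdot> a) = dm h" using assms(2) kc by simp
  moreover have "zero_mor C (h \<cdot> (k \<cdot> a))"
    using zero_mor_comp_right[OF is_kernel_zero[OF k], of a] assms(2) kc by simp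
  ultimately have "\<exists>!t. hom C t (dm (k \<cdot> a)) (dm k) \<and> k \<cdot> t = k \<cdot> a"
    by (rule is_kernel_lift[OF k])
  moreover have "hom C a (dm (k \<cdot> a)) (dm k) \<and> k \<cdot> a = k \<cdot> a"
    using assms(2) kc unfolding hom_def by simp
  moreover have "hom C b (dm (k \<cdot> a)) (dm k) \<and> k \<cdot> b = k \<cdot> a"
    using assms(2-5) kc unfolding hom_def by simp
  ultimately show ?thesis by blast
qed

lemma is_kernel_comp_iso:
  assumes k: "is_kernel C h k" and s: "iso C s" "cd s = dm k"
  shows "is_kernel C h (k \<cdot> s)"
proof -
  obtain s' where s': "iso C s'" "dm s' = cd s" "cd s' = dm s" "s' \<cdot> s = idt C (dm s)" "s \<cdot> s' = idt C (cd s)"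
    using s(1) by (rule isoE)
  have kc: "cd k = dm h" using k by (rule is_kernel_cod)
  show ?thesis unfolding is_kernel_def
  proof (intro conjI allI impI)
    show "cd (k \<cdot> s) = dm h" using kc s by simp
    show "zero_mor C (h \<cdot> (k \<cdot> s))"
      using zero_mor_comp_right[OF is_kernel_zero[OF k], of s] kc s by simp
  next
    fix g assume g: "cd g = dm h \<and> zero_mor C (h \<cdot> g)"
    then obtain t where t: "dm t = dm g" "cd t = dm k" "k \<cdot> t = g"
      using is_kernel_lift[OF k] unfolding hom_def by blast
    show "\<exists>!t'. hom C t' (dm g) (dm (k \<cdot> s)) \<and> k \<cdot> s \<cdot> t' = g"
    proof (rule ex1I[of _ "s' \<cdot> t"])
      have "s \<cdot> (s' \<cdot> t) = t" using s s' t by simp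
      then show "hom C (s' \<cdot> t) (dm g) (dm (k \<cdot> s)) \<and> k \<cdot> s \<cdot> (s' \<cdot> t) = g"
        using s s' t kc unfolding hom_def by (simp flip: comp_assoc)
    next
      fix t' assume t': "hom C t' (dm g) (dm (k \<cdot> s)) \<and> k \<cdot> s \<cdot> t' = g"
      have "s \<cdot> t' = t"
        by (rule is_kernel_cancel[OF k]) (use s t t' kc in \<open>auto simp: hom_def\<close>)
      moreover have "s' \<cdot> (s \<cdot> t') = t'" using s s' t' kc unfolding hom_def by simp
      ultimately show "t' = s' \<cdot> t" by simp
    qed
  qed
qed

lemma is_kernel_unique:
  assumes k: "is_kernel C h k" and k': "is_kernel C h k'"
  obtains s where "iso C s" "dm s = dm k" "cd s = dm k'" "k' \<cdot> s = k"
proof -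
  have kc: "cd k = dm h" "cd k' = dm h" using k k' by (blast intro: is_kernel_cod)+
  obtain s where s: "dm s = dm k" "cd s = dm k'" "k' \<cdot> s = k"
    using is_kernel_lift[OF k' kc(1) is_kernel_zero[OF k]] unfolding hom_def by blast
  obtain s' where s': "dm s' = dm k'" "cd s' = dm k" "k \<cdot> s' = k'"
    using is_kernel_lift[OF k kc(2) is_kernel_zero[OF k']] unfolding hom_def by blast
  have "s' \<cdot> s = idt C (dm s)"
    by (rule is_kernel_cancel[OF k]) (use s s' kc in simp_all)
  moreover have "s \<cdot> s' = idt C (cd s)"
    by (rule is_kernel_cancel[OF k']) (use s s' kc in simp_all)
  ultimately show ?thesis using that s s' isoI[of s' s] by simp
qed

text \<open>Kernels pass to compatible retracts, even when \<open>h\<close> restricts to \<open>h'\<close> only up to the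
  split monomorphism \<open>A\<close>.\<close>
lemma is_kernel_retract:
  assumes k: "is_kernel C h k"
    and e: "is_retract e p" and e': "is_retract e' p'" and A: "is_retract A B"
    and types: "dm h = cd e" "cd e' = dm k" "dm k' = dm e'" "cd k' = dm e"
      "dm h' = dm e" "cd h' = dm A" "cd A = cd h"
    and ke': "k \<cdot> e' = e \<cdot> k'" and pk: "k' \<cdot> p' = p \<cdot> k" and he: "h \<cdot> e = A \<cdot> h'"
  shows "is_kernel C h' k'"
proof -
  have kc: "cd k = dm h" using k by (rule is_kernel_cod)
  note [simp] = types kc e[unfolded is_retract_def] e'[unfolded is_retract_def] A[unfolded is_retract_def]
  have "h' \<cdot> k' = B \<cdot> (h \<cdot> k) \<cdot> e'"
  proof -
    have "h' \<cdot> k' = B \<cdot> A \<cdot> h' \<cdot> k'" by simp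
    also have "\<dots> = B \<cdot> (h \<cdot> e) \<cdot> k'" by (simp add: he)
    also have "\<dots> = B \<cdot> h \<cdot> (k \<cdot> e')" by (simp add: ke')
    finally show ?thesis by simp
  qed
  then have zero: "zero_mor C (h' \<cdot> k')"
    using zero_mor_comp_right[OF zero_mor_comp_left[OF is_kernel_zero[OF k]]] by simp
  show ?thesis unfolding is_kernel_def
  proof (intro conjI allI impI)
    show "cd k' = dm h'" by simp
    show "zero_mor C (h' \<cdot> k')" by (fact zero)
  next
    fix g assume g: "cd g = dm h' \<and> zero_mor C (h' \<cdot> g)"
    have "zero_mor C (A \<cdot> (h' \<cdot> g))" by (rule zero_mor_comp_left) (use g in simp_all)
    moreover have "h \<cdot> (e \<cdot> g) = A \<cdot> (h' \<cdot> g)" using g by (simp add: he)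
    ultimately obtain t where t: "dm t = dm g" "cd t = dm k" "k \<cdot> t = e \<cdot> g"
      using is_kernel_lift[OF k, of "e \<cdot> g"] g unfolding hom_def by auto
    show "\<exists>!t'. hom C t' (dm g) (dm k') \<and> k' \<cdot> t' = g"
    proof (rule ex1I[of _ "p' \<cdot> t"])
      have "k' \<cdot> (p' \<cdot> t) = g" using g t comp_eq_extend[OF t(3), of p] by (simp add: pk)
      then show "hom C (p' \<cdot> t) (dm g) (dm k') \<and> k' \<cdot> (p' \<cdot> t) = g"
        using g t unfolding hom_def by simp
    next
      fix t' assume t': "hom C t' (dm g) (dm k') \<and> k' \<cdot> t' = g"
      have ket': "k \<cdot> e' \<cdot> t' = e \<cdot> g"
        using t' comp_eq_extend[of k' t' g e] unfolding hom_def by (simp add: ke')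
      have "e' \<cdot> t' = t"
        by (rule is_kernel_cancel[OF k]) (use t t' ket' in \<open>simp_all add: hom_def\<close>)
      moreover have "p' \<cdot> (e' \<cdot> t') = t'" using t' unfolding hom_def by simp
      ultimately show "t' = p' \<cdot> t" by simp
    qed
  qed
qed

end

locale proto_exact_category =
  fixes C :: "('o, 'm) pecd"
  assumes proto_exact: "proto_exact C"

sublocale proto_exact_category \<subseteq> pointed_category
  using proto_exact unfolding proto_exact_def by unfold_locales blast+

context proto_exact_category
begin

lemma iso_infl: "iso C f \<Longrightarrow> infl C f"
  and iso_defl: "iso C f \<Longrightarrow> defl C f"
  and infl_comp: "cd f = dm g \<Longrightarrow> infl C f \<Longrightarrow> infl C g \<Longrightarrow> infl C (g \<cdot> f)"
  and defl_comp: "cd f = dm g \<Longrightarrow> defl C f \<Longrightarrow> defl C g \<Longrightarrow> defl C (g \<cdot> f)"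
  and from_zero_infl: "infl C (from_zero X)"
  using proto_exact from_zero_hom unfolding proto_exact_def by blast+

lemma cospan_completion:
  assumes "infl C i'" "defl C d'" "cd i' = cd d'"
  obtains i d where "adm_sq C i d d' i'" "bicart C i d d' i'"
  using proto_exact assms unfolding proto_exact_def by blast

text \<open>The kernel of a deflation \<open>h\<close> is the pullback of \<open>0 \<rightarrowtail> cod h\<close> along \<open>h\<close>.\<close>
lemma defl_has_infl_kernel:
  assumes h: "defl C h"
  obtains k where "is_kernel C h k" "infl C k"
proof -
  let ?e = "from_zero (cd h)"
  obtain k d where sq: "adm_sq C k d h ?e" "bicart C k d h ?e"
    by (rule cospan_completion[OF from_zero_infl h from_zero_cod])
  have kd: "dm d = dm k" "cd k = dm h" "cd d = zobj C" "h \<cdot> k = ?e \<cdot> d"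
    using sq(1) unfolding adm_sq_def comm_sq_def by auto
  have "is_kernel C h k"
    unfolding is_kernel_def
  proof (intro conjI allI impI)
    show "cd k = dm h" by (fact kd(2))
    show "zero_mor C (h \<cdot> k)"
      unfolding zero_mor_def hom_def using kd by (intro exI[of _ d] exI[of _ ?e]) simp
  next
    fix g assume g: "cd g = dm h \<and> zero_mor C (h \<cdot> g)"
    then have "h \<cdot> g = zero_hom C (dm (h \<cdot> g)) (cd (h \<cdot> g))"
      unfolding zero_mor_iff by blast
    also have "\<dots> = ?e \<cdot> to_zero (dm g)" using g by (simp add: zero_hom_eq)
    finally have "\<exists>!t. hom C t (dm (to_zero (dm g))) (dm k) \<and> d \<cdot> t = to_zero (dm g) \<and> k \<cdot> t = g"
      by (intro sq(2)[unfolded bicart_def pullback_def, THEN conjunct1, THEN conjunct2, rule_format]) (use g in simp)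
    moreover have "d \<cdot> t = to_zero (dm g)" if "hom C t (dm g) (dm k)" for t
      by (rule to_zero_unique) (use that kd in \<open>simp_all add: hom_def\<close>)
    ultimately show "\<exists>!t. hom C t (dm g) (dm k) \<and> k \<cdot> t = g" by simp blast
  qed
  moreover have "infl C k" using sq(1) unfolding adm_sq_def by blast
  ultimately show ?thesis by (rule that)
qed

lemma is_kernel_infl:
  assumes "defl C h" "is_kernel C h k"
  shows "infl C k"
proof -
  obtain k0 where k0: "is_kernel C h k0" "infl C k0" using defl_has_infl_kernel[OF assms(1)] .
  obtain s where "iso C s" "dm s = dm k" "cd s = dm k0" "k0 \<cdot> s = k"
    using is_kernel_unique[OF assms(2) k0(1)] .
  then show ?thesis using k0(2) infl_comp[of s k0] iso_infl by simp
qed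

end

locale coproduct_category = pointed_category +
  assumes coproducts: "has_coproducts C"
begin

lemma inj_dom_cod [simp]:
  "dm (inj1 C X Y) = X" "cd (inj1 C X Y) = cop C X Y"
  "dm (inj2 C X Y) = Y" "cd (inj2 C X Y) = cop C X Y"
  using coproducts unfolding has_coproducts_def hom_def by blast+

lemma coproduct_universal:
  assumes "cd a = cd b"
  shows "\<exists>!h. hom C h (cop C (dm a) (dm b)) (cd a) \<and>
    h \<cdot> inj1 C (dm a) (dm b) = a \<and> h \<cdot> inj2 C (dm a) (dm b) = b"
  using coproducts assms unfolding has_coproducts_def by simp

lemma copair:
  assumes "cd a = cd b"
  shows "dm (copair C a b) = cop C (dm a) (dm b)" "cd (copair C a b) = cd a"
    "copair C a b \<cdot> inj1 C (dm a) (dm b) = a" "copair C a b \<cdot> inj2 C (dm a) (dm b) = b"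
  using theI'[OF coproduct_universal[OF assms]] unfolding copair_def hom_def by blast+

lemma copair_dom_cod [simp]:
  "cd a = cd b \<Longrightarrow> dm (copair C a b) = cop C (dm a) (dm b)"
  "cd a = cd b \<Longrightarrow> cd (copair C a b) = cd a"
  using copair by blast+

lemma copair_inj [simp]:
  "cd a = cd b \<Longrightarrow> dm a = X \<Longrightarrow> dm b = Y \<Longrightarrow> copair C a b \<cdot> inj1 C X Y = a"
  "cd a = cd b \<Longrightarrow> dm a = X \<Longrightarrow> dm b = Y \<Longrightarrow> copair C a b \<cdot> inj2 C X Y = b"
  using copair by blast+

lemma coproduct_ext:
  assumes "dm h = cop C X Y" "dm h' = cop C X Y" "cd h = cd h'"
    "h \<cdot> inj1 C X Y = h' \<cdot> inj1 C X Y" "h \<cdot> inj2 C X Y = h' \<cdot> inj2 C X Y"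
  shows "h = h'"
  using coproduct_universal[of "h \<cdot> inj1 C X Y" "h \<cdot> inj2 C X Y"] assms
  unfolding hom_def by simp blast

lemma dsum_dom_cod [simp]:
  "dm (dsum C f g) = cop C (dm f) (dm g)" "cd (dsum C f g) = cop C (cd f) (cd g)"
  unfolding dsum_def by simp_all

lemma dsum_inj [simp]:
  "dm f = X \<Longrightarrow> dm g = Y \<Longrightarrow> dsum C f g \<cdot> inj1 C X Y = inj1 C (cd f) (cd g) \<cdot> f"
  "dm f = X \<Longrightarrow> dm g = Y \<Longrightarrow> dsum C f g \<cdot> inj2 C X Y = inj2 C (cd f) (cd g) \<cdot> g"
  unfolding dsum_def by simp_all

lemmas dsum_inj_extend [simp] = comp_eq_extend[OF dsum_inj(1)] comp_eq_extend[OF dsum_inj(2)]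

lemma dsum_comp:
  assumes "cd f = dm f'" "cd g = dm g'"
  shows "dsum C (f' \<cdot> f) (g' \<cdot> g) = dsum C f' g' \<cdot> dsum C f g"
  by (rule coproduct_ext[of _ "dm f" "dm g"]) (use assms in simp_all)

lemma dsum_id: "dsum C (idt C X) (idt C Y) = idt C (cop C X Y)"
  by (rule coproduct_ext[of _ X Y]) simp_all

lemma iso_dsum:
  assumes "iso C f" "iso C g"
  shows "iso C (dsum C f g)"
proof -
  obtain f' where f': "dm f' = cd f" "cd f' = dm f" "f' \<cdot> f = idt C (dm f)" "f \<cdot> f' = idt C (cd f)"
    using assms(1) by (rule isoE)
  obtain g' where g': "dm g' = cd g" "cd g' = dm g" "g' \<cdot> g = idt C (dm g)" "g \<cdot> g' = idt C (cd g)"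
    using assms(2) by (rule isoE)
  show ?thesis
    by (rule isoI[of "dsum C f' g'"]) (use f' g' in \<open>simp_all flip: dsum_comp add: dsum_id\<close>)
qed

lemma proj_dom_cod [simp]:
  "dm (proj1 C X Y) = cop C X Y" "cd (proj1 C X Y) = X"
  "dm (proj2 C X Y) = cop C X Y" "cd (proj2 C X Y) = Y"
  unfolding proj1_def proj2_def by simp_all

lemma proj_inj [simp]:
  "proj1 C X Y \<cdot> inj1 C X Y = idt C X" "proj1 C X Y \<cdot> inj2 C X Y = zero_hom C Y X"
  "proj2 C X Y \<cdot> inj2 C X Y = idt C Y" "proj2 C X Y \<cdot> inj1 C X Y = zero_hom C X Y"
  unfolding proj1_def proj2_def by simp_all

lemmas proj_inj_extend [simp] =
  comp_eq_extend[OF proj_inj(1)] comp_eq_extend[OF proj_inj(2)]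
  comp_eq_extend[OF proj_inj(3)] comp_eq_extend[OF proj_inj(4)]

lemma is_retract_inj_proj:
  "is_retract (inj1 C X Y) (proj1 C X Y)" "is_retract (inj2 C X Y) (proj2 C X Y)"
  unfolding is_retract_def by simp_all

lemma proj_dsum [simp]:
  "cd f = X \<Longrightarrow> cd g = Y \<Longrightarrow> proj1 C X Y \<cdot> dsum C f g = f \<cdot> proj1 C (dm f) (dm g)"
  "cd f = X \<Longrightarrow> cd g = Y \<Longrightarrow> proj2 C X Y \<cdot> dsum C f g = g \<cdot> proj2 C (dm f) (dm g)"
  by (rule coproduct_ext[of _ "dm f" "dm g"]; simp add: zero_hom_comp_left zero_hom_comp_right)+

lemmas proj_dsum_extend [simp] = comp_eq_extend[OF proj_dsum(1)] comp_eq_extend[OF proj_dsum(2)]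

end

locale proto_exact_duality = proto_exact_category +
  assumes duality: "exact_duality C"
begin

abbreviation P where "P \<equiv> Pmor C"

lemma P_dom_cod [simp]: "dm (P f) = Pob C (cd f)" "cd (P f) = Pob C (dm f)"
  using duality unfolding exact_duality_def hom_def by blast+

lemma P_comp: "cd f = dm g \<Longrightarrow> P (g \<cdot> f) = P f \<cdot> P g"
  and P_id [simp]: "P (idt C X) = idt C (Pob C X)"
  and infl_iff_defl_P: "infl C f \<longleftrightarrow> defl C (P f)"
  using duality unfolding exact_duality_def by blast+

lemma is_retract_P: "is_retract s r \<Longrightarrow> is_retract (P r) (P s)"
  unfolding is_retract_def by (simp flip: P_comp)

lemma isotropic_kernel:
  assumes i: "isotropic C M \<psi> i" and \<psi>: "hom C \<psi> M (Pob C M)" "iso C \<psi>"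
  obtains k u where "is_kernel C (P i \<cdot> \<psi>) k" "infl C k"
    "infl C u" "dm u = dm i" "cd u = dm k" "k \<cdot> u = i"
proof -
  obtain k u where ku: "is_kernel C (P i \<cdot> \<psi>) k" "infl C u" "dm u = dm i" "cd u = dm k" "k \<cdot> u = i"
    and i': "infl C i" "cd i = M"
    using i unfolding isotropic_def hom_def by blast
  have "defl C (P i \<cdot> \<psi>)"
    using \<psi> i' iso_defl[of \<psi>] infl_iff_defl_P[of i] defl_comp[of \<psi> "P i"] unfolding hom_def by simp
  with ku show ?thesis using that is_kernel_infl by blast
qed

lemma isotropicI:
  assumes \<psi>: "hom C \<psi> M (Pob C M)"
    and k: "is_kernel C (P (k \<cdot> u) \<cdot> \<psi>) k" "infl C k" "cd k = M"
    and u: "infl C u" "cd u = dm k"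
  shows "isotropic C M \<psi> (k \<cdot> u)"
proof -
  have "zero_mor C (P (k \<cdot> u) \<cdot> \<psi> \<cdot> k \<cdot> u)"
    by (rule zero_mor_comp_right[OF is_kernel_zero[OF k(1)]]) (use \<psi> k u in \<open>simp add: hom_def\<close>)
  moreover have "\<exists>k' u'. is_kernel C (P (k \<cdot> u) \<cdot> \<psi>) k' \<and> hom C u' (dm (k \<cdot> u)) (dm k') \<and>
      k' \<cdot> u' = k \<cdot> u \<and> infl C u'"
    by (rule exI[of _ k], rule exI[of _ u]) (use k u in \<open>simp add: hom_def\<close>)
  ultimately show ?thesis
    unfolding isotropic_def using \<psi> k u infl_comp[of u k] by (simp add: hom_def)
qed

lemma isotropic_retract:
  assumes k: "is_kernel C (P i \<cdot> \<psi>) k"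
    and e: "is_retract e p" and e': "is_retract e' p'" and r: "is_retract s r" and f: "iso C f"
    and types: "cd i = cd e" "hom C \<psi> (cd e) (Pob C (cd e))" "hom C \<psi>' (dm e) (Pob C (dm e))"
      "cd e' = dm k" "hom C k' (dm e') (dm e)" "cd v = dm e'" "cd r = dm v" "hom C f (dm i) (dm r)"
    and infl: "infl C k'" "infl C v"
    and ke': "k \<cdot> e' = e \<cdot> k'" and pk: "k' \<cdot> p' = p \<cdot> k"
    and \<psi>e: "\<psi> \<cdot> e = P p \<cdot> \<psi>'" and pi: "p \<cdot> i = k' \<cdot> v \<cdot> r \<cdot> f"
  shows "isotropic C (dm e) \<psi>' (k' \<cdot> v)"
proof -
  note [simp] = types[unfolded hom_def] e[unfolded is_retract_def] r[unfolded is_retract_def]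
  obtain s' where s': "is_retract s' (r \<cdot> f)"
    by (rule is_retract_comp_iso[OF r f]) (use types in \<open>simp add: hom_def\<close>)
  have "P i \<cdot> \<psi> \<cdot> e = P i \<cdot> P p \<cdot> \<psi>'" using comp_eq_extend[OF \<psi>e, of "P i"] by simp
  also have "\<dots> = P (k' \<cdot> v \<cdot> r \<cdot> f) \<cdot> \<psi>'" by (simp flip: pi add: P_comp)
  also have "\<dots> = P (r \<cdot> f) \<cdot> (P (k' \<cdot> v) \<cdot> \<psi>')" by (simp add: P_comp)
  finally have ker: "is_kernel C (P (k' \<cdot> v) \<cdot> \<psi>') k'"
    by (intro is_kernel_retract[OF k e e' is_retract_P[OF s'] _ _ _ _ _ _ _ ke' pk])
      (simp_all add: is_kernel_cod[OF k])
  then show ?thesis by (rule isotropicI[rotated]) (simp_all add: infl hom_def)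
qed

end

locale combinatorial_duality = proto_exact_duality + coproduct_category +
  assumes combinatorial: "combinatorial C" and additive: "additive_duality C"
begin

lemma combinatorial_split:
  assumes "infl C j" "cd j = cop C X1 X2"
  obtains j1 j2 f where "infl C j1" "infl C j2" "cd j1 = X1" "cd j2 = X2"
    "iso C f" "dm f = dm j" "cd f = cop C (dm j1) (dm j2)" "dsum C j1 j2 \<cdot> f = j"
  using combinatorial assms unfolding combinatorial_def hom_def by metis

lemma can_dom_cod [simp]:
  "dm (can C X Y) = cop C (Pob C X) (Pob C Y)" "cd (can C X Y) = Pob C (cop C X Y)"
  unfolding can_def by simp_all

lemma can_inj [simp]:
  "can C X Y \<cdot> inj1 C (Pob C X) (Pob C Y) = P (proj1 C X Y)"
  "can C X Y \<cdot> inj2 C (Pob C X) (Pob C Y) = P (proj2 C X Y)"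
  unfolding can_def by simp_all

context
  fixes M1 M2 \<psi>1 \<psi>2
  assumes \<psi>1: "hom C \<psi>1 M1 (Pob C M1)" and \<psi>2: "hom C \<psi>2 M2 (Pob C M2)"
begin

lemma sum_form_hom: "hom C (sum_form C M1 M2 \<psi>1 \<psi>2) (cop C M1 M2) (Pob C (cop C M1 M2))"
  using \<psi>1 \<psi>2 unfolding sum_form_def hom_def by simp

lemma sum_form_inj:
  "sum_form C M1 M2 \<psi>1 \<psi>2 \<cdot> inj1 C M1 M2 = P (proj1 C M1 M2) \<cdot> \<psi>1"
  "sum_form C M1 M2 \<psi>1 \<psi>2 \<cdot> inj2 C M1 M2 = P (proj2 C M1 M2) \<cdot> \<psi>2"
  using \<psi>1 \<psi>2 unfolding sum_form_def hom_def by simp_all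

lemma iso_sum_form: "iso C \<psi>1 \<Longrightarrow> iso C \<psi>2 \<Longrightarrow> iso C (sum_form C M1 M2 \<psi>1 \<psi>2)"
  using \<psi>1 \<psi>2 additive unfolding sum_form_def additive_duality_def hom_def
  by (simp add: iso_comp iso_dsum)

end

lemma isotropic_sum_split:
  assumes \<psi>1: "sym_form C M1 \<psi>1" and \<psi>2: "sym_form C M2 \<psi>2"
    and i: "isotropic C (cop C M1 M2) (sum_form C M1 M2 \<psi>1 \<psi>2) i"
  obtains k1 k2 v1 v2 f where
    "is_kernel C (P i \<cdot> sum_form C M1 M2 \<psi>1 \<psi>2) (dsum C k1 k2)"
    "infl C k1" "infl C k2" "cd k1 = M1" "cd k2 = M2"
    "infl C v1" "infl C v2" "cd v1 = dm k1" "cd v2 = dm k2"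
    "iso C f" "dm f = dm i" "cd f = cop C (dm v1) (dm v2)"
    "dsum C k1 k2 \<cdot> dsum C v1 v2 \<cdot> f = i"
proof -
  let ?\<psi> = "sum_form C M1 M2 \<psi>1 \<psi>2"
  have "hom C \<psi>1 M1 (Pob C M1)" "iso C \<psi>1" "hom C \<psi>2 M2 (Pob C M2)" "iso C \<psi>2"
    using \<psi>1 \<psi>2 unfolding sym_form_def by blast+
  then have \<psi>: "hom C ?\<psi> (cop C M1 M2) (Pob C (cop C M1 M2))" "iso C ?\<psi>"
    by (simp_all add: sum_form_hom iso_sum_form)
  obtain k u where k: "is_kernel C (P i \<cdot> ?\<psi>) k" "infl C k"
      and u: "infl C u" "dm u = dm i" "cd u = dm k" "k \<cdot> u = i"
    by (rule isotropic_kernel[OF i \<psi>])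
  have "cd i = cop C M1 M2" using i unfolding isotropic_def by blast
  then have "cd k = cop C M1 M2" using is_kernel_cod[OF k(1)] \<psi> unfolding hom_def by simp
  then obtain k1 k2 g where kk: "infl C k1" "infl C k2" "cd k1 = M1" "cd k2 = M2"
      and g: "iso C g" "dm g = dm k" "cd g = cop C (dm k1) (dm k2)" "dsum C k1 k2 \<cdot> g = k"
    by (rule combinatorial_split[OF k(2)])
  obtain g' where g': "iso C g'" "dm g' = cd g" "cd g' = dm g" "g \<cdot> g' = idt C (cd g)"
    using g(1) by (rule isoE)
  have "dsum C k1 k2 = dsum C k1 k2 \<cdot> g \<cdot> g'" using g(2,3) g' by (simp flip: comp_assoc)
  also have "\<dots> = k \<cdot> g'" using g(4) by simp
  finally have ker: "is_kernel C (P i \<cdot> ?\<psi>) (dsum C k1 k2)"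
    using is_kernel_comp_iso[OF k(1) g'(1)] g g' by simp
  have "infl C (g \<cdot> u)" "cd (g \<cdot> u) = cop C (dm k1) (dm k2)"
    using g u by (simp_all add: infl_comp iso_infl)
  then obtain v1 v2 f where vv: "infl C v1" "infl C v2" "cd v1 = dm k1" "cd v2 = dm k2"
      and f: "iso C f" "dm f = dm (g \<cdot> u)" "cd f = cop C (dm v1) (dm v2)" "dsum C v1 v2 \<cdot> f = g \<cdot> u"
    by (rule combinatorial_split)
  have "dsum C k1 k2 \<cdot> dsum C v1 v2 \<cdot> f = dsum C k1 k2 \<cdot> (g \<cdot> u)"
    using vv f by (simp flip: comp_assoc)
  also have "\<dots> = i" using g u kk by simp
  moreover have "dm f = dm i" using f(2) g u by simp
  ultimately show ?thesis using that ker kk vv f(1,3) by blast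
qed

lemma isotropic_sum_components:
  assumes \<psi>1: "hom C \<psi>1 M1 (Pob C M1)" and \<psi>2: "hom C \<psi>2 M2 (Pob C M2)"
    and ker: "is_kernel C (P i \<cdot> sum_form C M1 M2 \<psi>1 \<psi>2) (dsum C k1 k2)"
    and k: "infl C k1" "infl C k2" "cd k1 = M1" "cd k2 = M2"
    and v: "infl C v1" "infl C v2" "cd v1 = dm k1" "cd v2 = dm k2"
    and f: "iso C f" "dm f = dm i" "cd f = cop C (dm v1) (dm v2)"
    and i: "dsum C k1 k2 \<cdot> dsum C v1 v2 \<cdot> f = i"
  shows "isotropic C M1 \<psi>1 (k1 \<cdot> v1)" "isotropic C M2 \<psi>2 (k2 \<cdot> v2)"
proof -
  have ci: "cd i = cop C M1 M2" using k v f by (simp flip: i)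
  note facts = k v f ci \<psi>1 \<psi>2 sum_form_hom[OF \<psi>1 \<psi>2] sum_form_inj[OF \<psi>1 \<psi>2]
  have "isotropic C (dm (inj1 C M1 M2)) \<psi>1 (k1 \<cdot> v1)"
    by (rule isotropic_retract[OF ker is_retract_inj_proj(1) is_retract_inj_proj(1)
          is_retract_inj_proj(1) f(1)])
      (use facts in \<open>simp_all add: hom_def flip: i\<close>)
  moreover have "isotropic C (dm (inj2 C M1 M2)) \<psi>2 (k2 \<cdot> v2)"
    by (rule isotropic_retract[OF ker is_retract_inj_proj(2) is_retract_inj_proj(2)
          is_retract_inj_proj(2) f(1)])
      (use facts in \<open>simp_all add: hom_def flip: i\<close>)
  ultimately show "isotropic C M1 \<psi>1 (k1 \<cdot> v1)" "isotropic C M2 \<psi>2 (k2 \<cdot> v2)" by simp_all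
qed

end

theorem lemma1p7:
  fixes C :: "('o, 'm) pecd"
  assumes "proto_exact C"
    and "exact_duality C"
    and "has_coproducts C"
    and "additive_duality C"
    and "combinatorial C"
    and "sym_form C M1 \<psi>1"
    and "sym_form C M2 \<psi>2"
    and "isotropic C (cop C M1 M2) (sum_form C M1 M2 \<psi>1 \<psi>2) i"
  shows "\<exists>i1 i2 f. isotropic C M1 \<psi>1 i1 \<and> isotropic C M2 \<psi>2 i2 \<and>
           hom C f (cdom C i) (cop C (cdom C i1) (cdom C i2)) \<and> iso C f \<and>
           cmp C (dsum C i1 i2) f = i"
proof -
  have "is_category C" "zero_object C (zobj C)" using assms(1) unfolding proto_exact_def by blast+
  then interpret combinatorial_duality C using assms(1-5) by unfold_locales auto
  have \<psi>: "hom C \<psi>1 M1 (Pob C M1)" "hom C \<psi>2 M2 (Pob C M2)"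
    using assms(6,7) unfolding sym_form_def by blast+
  obtain k1 k2 v1 v2 f where ker: "is_kernel C (P i \<cdot> sum_form C M1 M2 \<psi>1 \<psi>2) (dsum C k1 k2)"
    and k: "infl C k1" "infl C k2" "cd k1 = M1" "cd k2 = M2"
    and v: "infl C v1" "infl C v2" "cd v1 = dm k1" "cd v2 = dm k2"
    and f: "iso C f" "dm f = dm i" "cd f = cop C (dm v1) (dm v2)"
    and i: "dsum C k1 k2 \<cdot> dsum C v1 v2 \<cdot> f = i"
    using isotropic_sum_split[OF assms(6-8)] .
  have "dsum C (k1 \<cdot> v1) (k2 \<cdot> v2) \<cdot> f = i" using i v by (simp add: dsum_comp)
  moreover have "hom C f (dm i) (cop C (dm (k1 \<cdot> v1)) (dm (k2 \<cdot> v2)))" using f v unfolding hom_def by simp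
  ultimately show ?thesis
    using isotropic_sum_components[OF \<psi> ker k v f i] f(1) by blast
qed

end
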